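(* Let $x_1\ge x_2\ge\cdots\ge x_n$ be integers and $q\ge1$ an integer, and suppose there is a set $S\subseteq[n]$ of size $2q$ such that all $x_i$ with $i\in S$ are equal. Increase $x_i$ by $1$ for $q$ of the indices $i\in S$ and decrease $x_i$ by $1$ for the other $q$ indices in $S$. Then $\Phi=\sum_{i=1}^n x_i^2$ increases by exactly $2q$, and $\Psi = n\sum_i|x_i| + \sum_{i<j}|x_i-x_j|$ increases by at least $2q^2$. *)

theory Defs
  imports Main
begin

definition Phi :: "nat \<Rightarrow> (nat \<Rightarrow> int) \<Rightarrow> int" where
  "Phi n x = (\<Sum>i\<in>{1..n}. (x i)^2)"

definition Psi :: "nat \<Rightarrow> (nat \<Rightarrow> int) \<Rightarrow> int" where
  "Psi n x = int n * (\<Sum>i\<in>{1..n}. \<bar>x i\<bar>)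
             + (\<Sum>(i,j)\<in>{(i,j). 1 \<le> i \<and> i < j \<and> j \<le> n}. \<bar>x i - x j\<bar>)"

end

theory Submission
  imports Defs
begin

text \<open>Only the entries in S move, from a common value c to c + 1 and c - 1, q times each.
  Squares change by (2c + 1) + (1 - 2c) = 2 per pair, and |t - 1| + |t + 1| \<ge> 2|t| shows that
  neither |x i| summed over S nor the distance from a fixed outside entry to S summed over S
  can decrease. The gain 2q^2 comes from the q^2 pairs of a raised and a lowered entry,
  whose distance grows from 0 to 2.\<close>

lemma abs_sub_one_add_abs_add_one_ge:
  fixes t :: "'a::linordered_idom"
  shows "2 * \<bar>t\<bar> \<le> \<bar>t - 1\<bar> + \<bar>t + 1\<bar>"
  using abs_triangle_ineq[of "t - 1" "t + 1"] by simp

lemma sum_sum_symmetric_eq_double_sum_less: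
  fixes f :: "'a::linorder \<Rightarrow> 'a \<Rightarrow> 'b::comm_semiring_1"
  assumes "finite A" and sym: "\<And>i j. f i j = f j i" and diag: "\<And>i. i \<in> A \<Longrightarrow> f i i = 0"
  shows "(\<Sum>i\<in>A. \<Sum>j\<in>A. f i j) = 2 * (\<Sum>(i, j)\<in>{(i, j). (i, j) \<in> A \<times> A \<and> i < j}. f i j)"
proof -
  let ?L = "{(i, j). (i, j) \<in> A \<times> A \<and> i < j}"
  let ?G = "{(i, j). (i, j) \<in> A \<times> A \<and> j < i}"
  let ?D = "{(i, j). (i, j) \<in> A \<times> A \<and> i = j}"
  have fin: "finite ?L" "finite ?G" "finite ?D"
    by (rule finite_subset[of _ "A \<times> A"]; use \<open>finite A\<close> in auto)+
  have "(\<Sum>(i, j)\<in>A \<times> A. f i j) = (\<Sum>(i, j)\<in>?L \<union> ?G \<union> ?D. f i j)"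
    by (rule sum.cong) auto
  also have "\<dots> = (\<Sum>(i, j)\<in>?L \<union> ?G. f i j) + (\<Sum>(i, j)\<in>?D. f i j)"
    by (rule sum.union_disjoint) (use fin in auto)
  also have "(\<Sum>(i, j)\<in>?L \<union> ?G. f i j) = (\<Sum>(i, j)\<in>?L. f i j) + (\<Sum>(i, j)\<in>?G. f i j)"
    by (rule sum.union_disjoint) (use fin in auto)
  also have "(\<Sum>(i, j)\<in>?G. f i j) = (\<Sum>(i, j)\<in>?L. f i j)"
    by (rule sum.reindex_bij_witness[where i = prod.swap and j = prod.swap]) (auto simp: sym)
  also have "(\<Sum>(i, j)\<in>?D. f i j) = 0"
    by (rule sum.neutral) (auto simp: diag)
  finally show ?thesis
    by (simp add: sum.cartesian_product mult_2)
qed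

lemma sum_sum_symmetric_split:
  fixes g :: "'a \<Rightarrow> 'a \<Rightarrow> 'b::comm_semiring_1"
  assumes "finite A" "S \<subseteq> A" and sym: "\<And>i j. g i j = g j i"
    and vanish: "\<And>i j. i \<in> A - S \<Longrightarrow> j \<in> A - S \<Longrightarrow> g i j = 0"
  shows "(\<Sum>i\<in>A. \<Sum>j\<in>A. g i j) = (\<Sum>i\<in>S. \<Sum>j\<in>S. g i j) + 2 * (\<Sum>i\<in>A - S. \<Sum>j\<in>S. g i j)"
proof -
  have split: "sum F A = sum F S + sum F (A - S)" for F :: "'a \<Rightarrow> 'b"
    using assms(1,2) by (simp add: sum.subset_diff add.commute)
  have "(\<Sum>i\<in>S. \<Sum>j\<in>A - S. g i j) = (\<Sum>i\<in>A - S. \<Sum>j\<in>S. g i j)"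
    by (subst sum.swap) (simp add: sym)
  moreover have "(\<Sum>i\<in>A - S. \<Sum>j\<in>A - S. g i j) = 0"
    by (simp add: vanish)
  ultimately show ?thesis
    by (simp add: split sum.distrib mult_2 algebra_simps)
qed

locale balanced_move =
  fixes S U :: "'a set" and q :: nat and c :: int and x :: "'a \<Rightarrow> int"
  assumes finite_S: "finite S" and U_subset: "U \<subseteq> S"
    and card_U: "card U = q" and card_S_minus_U: "card (S - U) = q"
    and x_on_S: "\<And>i. i \<in> S \<Longrightarrow> x i = c"
begin

definition moved :: "'a \<Rightarrow> int" where
  "moved i = (if i \<in> U then x i + 1 else if i \<in> S then x i - 1 else x i)"

lemma moved_U: "i \<in> U \<Longrightarrow> moved i = c + 1"
  using U_subset x_on_S by (auto simp: moved_def)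

lemma moved_S_minus_U: "i \<in> S - U \<Longrightarrow> moved i = c - 1"
  using x_on_S by (simp add: moved_def)

lemma moved_outside: "i \<notin> S \<Longrightarrow> moved i = x i"
  using U_subset by (auto simp: moved_def)

lemma sum_S_two_valued:
  fixes F :: "'a \<Rightarrow> 'b::comm_semiring_1"
  assumes "\<And>i. i \<in> U \<Longrightarrow> F i = a" "\<And>i. i \<in> S - U \<Longrightarrow> F i = b"
  shows "sum F S = of_nat q * (a + b)"
proof -
  have "sum F S = sum F U + sum F (S - U)"
    using finite_S U_subset by (simp add: sum.subset_diff add.commute)
  also have "\<dots> = of_nat q * a + of_nat q * b"
    using assms card_U card_S_minus_U by simp
  finally show ?thesis by (simp add: distrib_left)
qed

lemma sum_square_moved:
  assumes "finite A" "S \<subseteq> A"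
  shows "(\<Sum>i\<in>A. (moved i)\<^sup>2) = (\<Sum>i\<in>A. (x i)\<^sup>2) + 2 * int q"
proof -
  have "(\<Sum>i\<in>A. (moved i)\<^sup>2 - (x i)\<^sup>2) = (\<Sum>i\<in>S. (moved i)\<^sup>2 - (x i)\<^sup>2)"
    using assms by (intro sum.mono_neutral_right) (auto simp: moved_outside)
  also have "\<dots> = int q * ((2 * c + 1) + (1 - 2 * c))"
    by (rule sum_S_two_valued)
      (auto simp: moved_U moved_S_minus_U x_on_S U_subset[THEN subsetD] power2_eq_square algebra_simps)
  finally show ?thesis by (simp add: sum_subtractf)
qed

lemma sum_abs_le_sum_abs_moved:
  assumes "finite A" "S \<subseteq> A"
  shows "(\<Sum>i\<in>A. \<bar>x i\<bar>) \<le> (\<Sum>i\<in>A. \<bar>moved i\<bar>)"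
proof -
  have "(\<Sum>i\<in>A. \<bar>moved i\<bar> - \<bar>x i\<bar>) = (\<Sum>i\<in>S. \<bar>moved i\<bar> - \<bar>x i\<bar>)"
    using assms by (intro sum.mono_neutral_right) (auto simp: moved_outside)
  also have "\<dots> = int q * ((\<bar>c + 1\<bar> - \<bar>c\<bar>) + (\<bar>c - 1\<bar> - \<bar>c\<bar>))"
    by (rule sum_S_two_valued) (auto simp: moved_U moved_S_minus_U x_on_S U_subset[THEN subsetD])
  also have "\<dots> \<ge> 0"
    using abs_sub_one_add_abs_add_one_ge[of c] by simp
  finally show ?thesis by (simp add: sum_subtractf)
qed

lemma sum_dist_le_sum_dist_moved_outside:
  assumes "i \<notin> S"
  shows "(\<Sum>j\<in>S. \<bar>x i - x j\<bar>) \<le> (\<Sum>j\<in>S. \<bar>moved i - moved j\<bar>)"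
proof -
  let ?t = "x i - c"
  have "(\<Sum>j\<in>S. \<bar>moved i - moved j\<bar> - \<bar>x i - x j\<bar>) = int q * ((\<bar>?t - 1\<bar> - \<bar>?t\<bar>) + (\<bar>?t + 1\<bar> - \<bar>?t\<bar>))"
    by (rule sum_S_two_valued)
      (auto simp: moved_outside[OF assms] moved_U moved_S_minus_U x_on_S U_subset[THEN subsetD] algebra_simps)
  also have "\<dots> \<ge> 0"
    using abs_sub_one_add_abs_add_one_ge[of ?t] by simp
  finally show ?thesis by (simp add: sum_subtractf)
qed

lemma sum_dist_moved_inside:
  assumes "i \<in> S"
  shows "(\<Sum>j\<in>S. \<bar>moved i - moved j\<bar>) = 2 * int q"
proof (cases "i \<in> U")
  case True
  then have "(\<Sum>j\<in>S. \<bar>moved i - moved j\<bar>) = int q * (0 + 2)"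
    by (intro sum_S_two_valued) (auto simp: moved_U moved_S_minus_U)
  then show ?thesis by simp
next
  case False
  then have "(\<Sum>j\<in>S. \<bar>moved i - moved j\<bar>) = int q * (2 + 0)"
    using assms by (intro sum_S_two_valued) (auto simp: moved_U moved_S_minus_U)
  then show ?thesis by simp
qed

lemma sum_sum_dist_moved:
  assumes "finite A" "S \<subseteq> A"
  shows "(\<Sum>i\<in>A. \<Sum>j\<in>A. \<bar>x i - x j\<bar>) + 4 * int q ^ 2 \<le> (\<Sum>i\<in>A. \<Sum>j\<in>A. \<bar>moved i - moved j\<bar>)"
proof -
  define g where "g i j = \<bar>moved i - moved j\<bar> - \<bar>x i - x j\<bar>" for i j
  have "(\<Sum>i\<in>S. \<Sum>j\<in>S. g i j) = int q * (2 * int q + 2 * int q)"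
    by (rule sum_S_two_valued; simp add: g_def sum_subtractf sum_dist_moved_inside x_on_S U_subset[THEN subsetD])
  also have "\<dots> = 4 * int q ^ 2"
    by (simp add: power2_eq_square)
  finally have inside: "(\<Sum>i\<in>S. \<Sum>j\<in>S. g i j) = 4 * int q ^ 2" .
  have outside: "0 \<le> (\<Sum>i\<in>A - S. \<Sum>j\<in>S. g i j)"
    by (rule sum_nonneg) (simp add: g_def sum_subtractf sum_dist_le_sum_dist_moved_outside)
  have "(\<Sum>i\<in>A. \<Sum>j\<in>A. g i j) = (\<Sum>i\<in>S. \<Sum>j\<in>S. g i j) + 2 * (\<Sum>i\<in>A - S. \<Sum>j\<in>S. g i j)"
    using assms by (intro sum_sum_symmetric_split) (auto simp: g_def moved_outside abs_minus_commute)
  with inside outside have "4 * int q ^ 2 \<le> (\<Sum>i\<in>A. \<Sum>j\<in>A. g i j)" by linarith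
  then show ?thesis by (simp add: g_def sum_subtractf)
qed

end

theorem proposition6p2:
  fixes n q :: nat and x :: "nat \<Rightarrow> int" and S U :: "nat set"
  assumes sorted: "\<And>i j. 1 \<le> i \<Longrightarrow> i \<le> j \<Longrightarrow> j \<le> n \<Longrightarrow> x j \<le> x i"
    and q: "q \<ge> 1"
    and S: "S \<subseteq> {1..n}" "card S = 2 * q"
    and eq: "\<And>i j. i \<in> S \<Longrightarrow> j \<in> S \<Longrightarrow> x i = x j"
    and U: "U \<subseteq> S" "card U = q"
  defines "y \<equiv> (\<lambda>i. if i \<in> U then x i + 1 else if i \<in> S then x i - 1 else x i)"
  shows "Phi n y = Phi n x + 2 * int q \<and> Psi n y \<ge> Psi n x + 2 * int q ^ 2"
proof -
  have "finite S" using S(1) finite_subset by blast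
  interpret balanced_move S U q "x (SOME i. i \<in> S)" x
  proof
    show "card (S - U) = q"
      using U S(2) \<open>finite S\<close> by (simp add: card_Diff_subset finite_subset)
    show "x i = x (SOME i. i \<in> S)" if "i \<in> S" for i
      using eq that someI[of "\<lambda>i. i \<in> S"] by blast
  qed (use \<open>finite S\<close> U in auto)
  have y: "y = moved" by (simp add: fun_eq_iff y_def moved_def)
  have pairs: "{(i, j). 1 \<le> i \<and> i < j \<and> j \<le> n} = {(i, j). (i, j) \<in> {1..n} \<times> {1..n} \<and> i < j}"
    by auto
  have double: "(\<Sum>i\<in>{1..n}. \<Sum>j\<in>{1..n}. \<bar>z i - z j\<bar>)
      = 2 * (\<Sum>(i, j)\<in>{(i, j). 1 \<le> i \<and> i < j \<and> j \<le> n}. \<bar>z i - z j\<bar>)" for z :: "nat \<Rightarrow> int"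
    unfolding pairs by (rule sum_sum_symmetric_eq_double_sum_less) (auto simp: abs_minus_commute)
  have "Phi n y = Phi n x + 2 * int q"
    unfolding Phi_def y using S(1) by (intro sum_square_moved) auto
  moreover have "int n * (\<Sum>i\<in>{1..n}. \<bar>x i\<bar>) \<le> int n * (\<Sum>i\<in>{1..n}. \<bar>y i\<bar>)"
    unfolding y using S(1) by (intro mult_left_mono sum_abs_le_sum_abs_moved) auto
  moreover have "(\<Sum>i\<in>{1..n}. \<Sum>j\<in>{1..n}. \<bar>x i - x j\<bar>) + 4 * int q ^ 2
      \<le> (\<Sum>i\<in>{1..n}. \<Sum>j\<in>{1..n}. \<bar>y i - y j\<bar>)"
    unfolding y using S(1) by (intro sum_sum_dist_moved) auto
  ultimately show ?thesis
    unfolding Psi_def double by linarith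
qed

end
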